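(* For integers $m,n\ge0$ let $u_{m,n}(x)=\exp\big(-\tfrac{x^4}{12}+\tfrac{m-n}{2}x^2\big)S_{(n^m)}(x,\tfrac16,0,0,\ldots)$. Then $$\big(D_x^2-xD_x+m+2n+1\big)u_{m,n+1}\cdot u_{m,n}=0,\quad \big(D_x^2-xD_x+m-n\big)u_{m+1,n}\cdot u_{m,n+1}=0,\quad \big(D_x^2-xD_x-2m-n-1\big)u_{m,n}\cdot u_{m+1,n}=0.$$ Namely, the triple $(\tau_0,\tau_1,\tau_2)=(u_{m,n},u_{m+1,n},u_{m,n+1})$ solves $\big(D_x^2-xD_x-\frac{\alpha_i-\alpha_{i+1}}{3}\big)\tau_i\cdot\tau_{i+1}=0$ ($i=0,1,2$, indices mod 3) with $(\alpha_0,\alpha_1,\alpha_2)=(3(m+n+1),-3m,-3n)$.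
   Context: $(n^m)$ is the rectangular partition with $m$ parts equal to $n$. Schur functions: $S_\lambda(t)=\det(p_{\lambda_i-i+j}(t))_{1\le i,j\le l(\lambda)}$ with $\sum_{n\ge0}p_n(t)z^n=\exp(\sum_{k\ge1}t_kz^k)$, $p_n=0$ for $n<0$, $S_\emptyset=1$. Hirota operators: $D_xF\cdot G=F'G-FG'$, $D_x^2F\cdot G=F''G-2F'G'+FG''$. *)

theory Defs
  imports Complex_Main "HOL-Analysis.Derivative" "HOL-Computational_Algebra.Formal_Power_Series"
    "Jordan_Normal_Form.Determinant"
begin

text \<open>Elementary Schur polynomials p_k at t = (x, 1/6, 0, 0, ...):
  sum_k p_k z^k = exp(x z + z^2/6) = exp(x z) * exp(z^2/6), with p_k = 0 for k < 0.\<close>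
definition p_elem :: "int \<Rightarrow> real \<Rightarrow> real" where
  "p_elem k x = (if k < 0 then 0
     else fps_nth (fps_exp x * (fps_exp (1/6) oo fps_X ^ 2)) (nat k))"

text \<open>Schur function of the rectangular partition (n^m) (m parts equal to n) at
  t = (x, 1/6, 0, ...): the m x m determinant det(p_{lambda_i - i + j}); empty det = 1.\<close>
definition schur_rect :: "nat \<Rightarrow> nat \<Rightarrow> real \<Rightarrow> real" where
  "schur_rect m n x = det (mat m m (\<lambda>(i, j). p_elem (int n - int i + int j) x))"

definition u_fun :: "nat \<Rightarrow> nat \<Rightarrow> real \<Rightarrow> real" where
  "u_fun m n x = exp (- (x ^ 4) / 12 + (real m - real n) / 2 * x ^ 2) * schur_rect m n x"

text \<open>(D_x^2 - x D_x + c) F . G evaluated at x.\<close>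
definition hirota_op :: "real \<Rightarrow> (real \<Rightarrow> real) \<Rightarrow> (real \<Rightarrow> real) \<Rightarrow> real \<Rightarrow> real" where
  "hirota_op c F G x =
     deriv (deriv F) x * G x - 2 * deriv F x * deriv G x + F x * deriv (deriv G) x
     - x * (deriv F x * G x - F x * deriv G x) + c * F x * G x"

end

theory Submission
  imports Defs
begin

text \<open>
  The polynomials p_k(x) = p_k(x, 1/6, 0, ...) satisfy p_k' = p_(k-1) and
  p_(k-2) = 3 (k p_k - x p_(k-1)). Differentiating the determinant s = det (p_(c-i+j)) therefore
  shifts one row, and shifting every row by two is the first-order operator 3 (N c - x d/dx).
  Once the exponential gauge factors are removed, each Hirota equation is a bilinear identity in
  which s'' - 3 (N c s - x s') and s'' + 3 (N c s - x s') are twice the determinants with the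
  last two rows, resp. the last row, shifted further. The identity thus becomes the three-term
  Pluecker relation between determinants that share all but two rows, a consequence of Cramer's
  rule.
\<close>

section \<open>Elementary Schur polynomials\<close>

definition elem_fps :: "real \<Rightarrow> real fps" where
  "elem_fps x = fps_exp x * (fps_exp (1/6) oo fps_X ^ 2)"

lemma fps_deriv_elem_fps:
  "fps_deriv (elem_fps x) = fps_const x * elem_fps x + fps_const (1/3) * fps_X * elem_fps x"
proof -
  have X2: "fps_nth (fps_X ^ 2 :: real fps) 0 = 0" by simp
  have "fps_deriv (fps_exp (1/6) oo fps_X ^ 2 :: real fps)
      = fps_const (1/3) * fps_X * (fps_exp (1/6) oo fps_X ^ 2)"
    by (simp add: fps_compose_deriv[OF X2] fps_compose_mult_distrib[OF X2] fps_const_compose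
        fps_deriv_power numeral_fps_const)
  then show ?thesis by (simp add: elem_fps_def algebra_simps)
qed

lemma elem_fps_nth_0: "fps_nth (elem_fps x) 0 = 1"
  by (simp add: elem_fps_def)

lemma elem_fps_nth_1: "fps_nth (elem_fps x) 1 = x"
  using arg_cong[OF fps_deriv_elem_fps, of "\<lambda>f. fps_nth f 0"] by (simp add: elem_fps_nth_0)

lemma elem_fps_nth_recurrence:
  "(real k + 2) * fps_nth (elem_fps x) (k + 2) = x * fps_nth (elem_fps x) (k + 1) + fps_nth (elem_fps x) k / 3"
  using arg_cong[OF fps_deriv_elem_fps, of "\<lambda>f. fps_nth f (Suc k)"] by (simp add: algebra_simps)

fun elem_poly_nat :: "nat \<Rightarrow> real poly" where
  "elem_poly_nat 0 = 1"
| "elem_poly_nat (Suc 0) = [:0, 1:]"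
| "elem_poly_nat (Suc (Suc k)) =
     smult (1 / (real k + 2)) ([:0, 1:] * elem_poly_nat (Suc k) + smult (1/3) (elem_poly_nat k))"

definition elem_poly :: "int \<Rightarrow> real poly" where
  "elem_poly k = (if k < 0 then 0 else elem_poly_nat (nat k))"

lemma poly_elem_poly_nat: "poly (elem_poly_nat k) x = fps_nth (elem_fps x) k"
proof (induction k rule: elem_poly_nat.induct)
  case (3 k)
  then show ?case
    using elem_fps_nth_recurrence[of k x] by (simp add: field_simps)
qed (simp_all add: elem_fps_nth_0 elem_fps_nth_1[simplified])

lemma poly_elem_poly: "poly (elem_poly k) x = p_elem k x"
  by (simp add: elem_poly_def p_elem_def poly_elem_poly_nat elem_fps_def)

lemma elem_poly_recurrence:
  "smult (of_int (k + 1)) (elem_poly (k + 1)) = [:0, 1:] * elem_poly k + smult (1/3) (elem_poly (k - 1))"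
proof (cases "k < 1")
  case True
  then consider "k < -1" | "k = -1" | "k = 0" by linarith
  then show ?thesis by cases (simp_all add: elem_poly_def)
next
  case False
  then obtain j where k: "k = int j + 1" by (metis add.commute nonneg_int_cases not_less zle_iff_zadd)
  have "elem_poly (k + 1) = elem_poly_nat (Suc (Suc j))" "elem_poly k = elem_poly_nat (Suc j)"
    "elem_poly (k - 1) = elem_poly_nat j" "of_int (k + 1) = real j + 2"
    unfolding k by (simp_all add: elem_poly_def nat_add_distrib)
  then show ?thesis by (simp add: add.commute)
qed

lemma pderiv_elem_poly: "pderiv (elem_poly k) = elem_poly (k - 1)"
proof -
  have nonneg: "pderiv (elem_poly (int j)) = elem_poly (int j - 1)" for j
  proof (induction j rule: elem_poly_nat.induct)
    case (3 j)
    have "elem_poly (int (Suc (Suc j)))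
        = smult (1 / (real j + 2)) ([:0, 1:] * elem_poly (int j + 1) + smult (1/3) (elem_poly (int j)))"
      by (simp add: elem_poly_def nat_add_distrib)
    then have "pderiv (elem_poly (int (Suc (Suc j))))
        = smult (1 / (real j + 2)) (elem_poly (int j + 1)
            + ([:0, 1:] * elem_poly (int j) + smult (1/3) (elem_poly (int j - 1))))"
      using 3 by (simp add: pderiv_mult pderiv_smult pderiv_add pderiv_pCons algebra_simps)
    also have "\<dots> = smult (1 / (real j + 2)) (smult (real j + 2) (elem_poly (int j + 1)))"
      unfolding elem_poly_recurrence[of "int j", symmetric]
      by (simp add: smult_add_left algebra_simps numeral_mult_conv_smult)
    also have "\<dots> = elem_poly (int (Suc j))" by (simp add: add.commute)
    finally show ?case by simp
  qed (simp_all add: elem_poly_def pderiv_pCons)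
  show ?thesis
  proof (cases "k < 0")
    case False
    then obtain j where "k = int j" by (metis nonneg_int_cases not_less)
    then show ?thesis using nonneg by simp
  qed (simp add: elem_poly_def)
qed

lemma elem_poly_lower2:
  "elem_poly (k - 2) = smult 3 (smult (of_int k) (elem_poly k) - [:0, 1:] * elem_poly (k - 1))"
  using elem_poly_recurrence[of "k - 1"] by (simp add: algebra_simps)

section \<open>Determinants as functions of their rows\<close>

definition det_rows :: "nat \<Rightarrow> (nat \<Rightarrow> nat \<Rightarrow> 'a :: comm_ring_1) \<Rightarrow> 'a" where
  "det_rows N V = det (mat N N (\<lambda>(i, j). V i j))"

definition cofactor_rows ::
    "nat \<Rightarrow> (nat \<Rightarrow> nat \<Rightarrow> 'a :: comm_ring_1) \<Rightarrow> nat \<Rightarrow> nat \<Rightarrow> 'a" where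
  "cofactor_rows N V i j = cofactor (mat N N (\<lambda>(i, j). V i j)) i j"

lemma det_rows_cong:
  "(\<And>i j. i < N \<Longrightarrow> j < N \<Longrightarrow> V i j = V' i j) \<Longrightarrow> det_rows N V = det_rows N V'"
  unfolding det_rows_def by (auto intro!: arg_cong[of _ _ det] eq_matI)

lemma det_rows_zero: "det_rows 0 V = 1"
  by (simp add: det_rows_def)

lemma det_rows_one: "det_rows (Suc 0) V = V 0 0"
  unfolding det_rows_def by (subst det_single) auto

lemma det_rows_identical_rows:
  assumes "i < N" "l < N" "i \<noteq> l" "\<And>j. j < N \<Longrightarrow> V i j = V l j"
  shows "det_rows N V = 0"
  unfolding det_rows_def
  by (rule det_identical_rows[of _ N i l]) (use assms in \<open>auto intro!: eq_vecI\<close>)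

lemma det_rows_swap:
  assumes "i < N" "l < N" "i \<noteq> l"
  shows "det_rows N (V(i := u, l := v)) = - det_rows N (V(i := v, l := u))"
proof -
  let ?B = "mat N N (\<lambda>(r, j). (V(i := v, l := u)) r j)"
  have "det_rows N (V(i := u, l := v)) = det (swaprows i l ?B)"
    unfolding det_rows_def using assms by (intro arg_cong[of _ _ det] eq_matI) auto
  also have "\<dots> = - det ?B"
    by (rule det_swaprows[OF assms]) simp
  finally show ?thesis by (simp add: det_rows_def)
qed

lemma det_rows_leibniz:
  "det_rows N V = (\<Sum>p | p permutes {0..<N}. signof p * (\<Prod>i = 0..<N. V i (p i)))"
  unfolding det_rows_def det_def
  by (auto intro!: sum.cong prod.cong simp: permutes_in_image)

lemma cofactor_rows_update:
  "cofactor_rows N (V(i := u)) i j = cofactor_rows N V i j"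
  unfolding cofactor_rows_def cofactor_def mat_delete_def
  by (rule arg_cong[where f = "\<lambda>B. (-1) ^ (i + j) * det B"]) (auto intro!: eq_matI)

lemma det_rows_row_expansion:
  "i < N \<Longrightarrow> det_rows N V = (\<Sum>j<N. V i j * cofactor_rows N V i j)"
  unfolding det_rows_def cofactor_rows_def by (subst laplace_expansion_row[of _ N]) auto

lemma det_rows_update_expansion:
  assumes "i < N"
  shows "det_rows N (V(i := u)) = (\<Sum>j<N. u j * cofactor_rows N V i j)"
  using det_rows_row_expansion[OF assms, of "V(i := u)"] by (simp add: cofactor_rows_update)

lemma det_rows_adjugate:
  assumes "j < N" "l < N"
  shows "(\<Sum>i<N. cofactor_rows N V i l * V i j) = (if l = j then det_rows N V else 0)"
proof -
  let ?A = "mat N N (\<lambda>(i, j). V i j)"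
  have "(\<Sum>i<N. cofactor_rows N V i l * V i j) = (adj_mat ?A * ?A) $$ (l, j)"
    using assms by (simp add: adj_mat_def cofactor_rows_def scalar_prod_def atLeast0LessThan)
  also have "\<dots> = (if l = j then det_rows N V else 0)"
    using adj_mat(3)[of ?A N] assms by (simp add: det_rows_def)
  finally show ?thesis .
qed

lemma det_rows_cramer:
  assumes "j < N"
  shows "det_rows N A * c j = (\<Sum>i<N. det_rows N (A(i := c)) * A i j)"
proof -
  have "(\<Sum>i<N. det_rows N (A(i := c)) * A i j) = (\<Sum>i<N. \<Sum>l<N. c l * (cofactor_rows N A i l * A i j))"
    by (simp add: det_rows_update_expansion sum_distrib_right mult.assoc)
  also have "\<dots> = (\<Sum>l<N. c l * (\<Sum>i<N. cofactor_rows N A i l * A i j))"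
    by (subst sum.swap) (simp add: sum_distrib_left)
  also have "\<dots> = (\<Sum>l<N. if l = j then c l * det_rows N A else 0)"
    using assms by (intro sum.cong) (simp_all add: det_rows_adjugate)
  finally show ?thesis using assms by (simp add: mult.commute)
qed

lemma det_rows_pluecker:
  fixes V W :: "nat \<Rightarrow> nat \<Rightarrow> 'a :: comm_ring_1"
  assumes N: "2 \<le> N" and k: "k < N"
    and vanish: "\<And>i. i < N - 2 \<Longrightarrow> det_rows N (W(k := V i)) = 0"
  shows "det_rows N (V(N - 2 := b, N - 1 := c)) * det_rows N (W(k := a))
       - det_rows N (V(N - 2 := a, N - 1 := c)) * det_rows N (W(k := b))
       + det_rows N (V(N - 2 := a, N - 1 := b)) * det_rows N (W(k := c)) = 0"
proof -
  define A where "A = V(N - 2 := a, N - 1 := b)"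
  define Z where "Z u = det_rows N (W(k := u))" for u
  \<comment> \<open>Expand \<open>det A * c\<close> by Cramer's rule in the rows of \<open>A\<close>;
    \<open>Z\<close> kills all of them but the last two.\<close>
  have Z: "Z u = (\<Sum>j<N. u j * cofactor_rows N W k j)" for u
    unfolding Z_def using k by (rule det_rows_update_expansion)
  have "det_rows N A * Z c = (\<Sum>j<N. (det_rows N A * c j) * cofactor_rows N W k j)"
    by (simp add: Z sum_distrib_left mult.assoc)
  also have "\<dots> = (\<Sum>j<N. (\<Sum>i<N. det_rows N (A(i := c)) * A i j) * cofactor_rows N W k j)"
    by (intro sum.cong refl) (simp add: det_rows_cramer)
  also have "\<dots> = (\<Sum>i<N. \<Sum>j<N. det_rows N (A(i := c)) * (A i j * cofactor_rows N W k j))"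
    by (subst sum.swap) (simp add: sum_distrib_right mult.assoc)
  also have "\<dots> = (\<Sum>i<N. det_rows N (A(i := c)) * Z (A i))"
    by (simp add: Z sum_distrib_left)
  also have "\<dots> = det_rows N (A(N - 2 := c)) * Z a + det_rows N (A(N - 1 := c)) * Z b"
  proof -
    obtain K where K: "N = Suc (Suc K)" using N by (metis add_2_eq_Suc le_Suc_ex)
    have "Z (A i) = 0" if "i < K" for i
      using vanish[of i] that by (simp add: Z_def A_def K)
    then show ?thesis by (simp add: K A_def)
  qed
  also have "A(N - 2 := c) = V(N - 2 := c, N - 1 := b)"
    using N by (auto simp: A_def fun_eq_iff)
  also have "det_rows N \<dots> = - det_rows N (V(N - 2 := b, N - 1 := c))"
    using N by (intro det_rows_swap) auto
  also have "A(N - 1 := c) = V(N - 2 := a, N - 1 := c)"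
    by (simp add: A_def)
  finally have "det_rows N A * Z c
      = - det_rows N (V(N - 2 := b, N - 1 := c)) * Z a + det_rows N (V(N - 2 := a, N - 1 := c)) * Z b" .
  moreover have "p = - q * z + r \<Longrightarrow> q * z - r + p = 0" for p q z r :: 'a
    by (simp add: algebra_simps)
  ultimately show ?thesis unfolding A_def Z_def by blast
qed

lemma det_rows_weighted_rows:
  fixes V :: "nat \<Rightarrow> nat \<Rightarrow> 'a :: comm_ring_1"
  shows "(\<Sum>k<N. det_rows N (V(k := (\<lambda>j. (w k + of_nat j) * V k j))))
       = ((\<Sum>k<N. w k) + (\<Sum>j<N. of_nat j)) * det_rows N V"
proof -
  have "(\<Sum>k<N. det_rows N (V(k := (\<lambda>j. (w k + of_nat j) * V k j))))
      = (\<Sum>k<N. \<Sum>j<N. w k * (V k j * cofactor_rows N V k j) + of_nat j * (cofactor_rows N V k j * V k j))"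
    by (simp add: det_rows_update_expansion algebra_simps)
  also have "\<dots> = (\<Sum>k<N. w k * (\<Sum>j<N. V k j * cofactor_rows N V k j))
        + (\<Sum>k<N. \<Sum>j<N. of_nat j * (cofactor_rows N V k j * V k j))"
    by (simp add: sum.distrib sum_distrib_left)
  also have "(\<Sum>k<N. \<Sum>j<N. of_nat j * (cofactor_rows N V k j * V k j))
      = (\<Sum>j<N. of_nat j * (\<Sum>k<N. cofactor_rows N V k j * V k j))"
    by (subst sum.swap) (simp add: sum_distrib_left)
  also have "\<dots> = (\<Sum>j<N. of_nat j * det_rows N V)"
    by (simp add: det_rows_adjugate)
  also have "(\<Sum>k<N. w k * (\<Sum>j<N. V k j * cofactor_rows N V k j)) = (\<Sum>k<N. w k * det_rows N V)"
    by (simp add: det_rows_row_expansion[symmetric])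
  finally show ?thesis by (simp only: distrib_right sum_distrib_right)
qed

lemma pderiv_det_rows:
  fixes V :: "nat \<Rightarrow> nat \<Rightarrow> 'a :: idom poly"
  shows "pderiv (det_rows N V) = (\<Sum>k<N. det_rows N (V(k := (\<lambda>j. pderiv (V k j)))))"
proof -
  let ?P = "{p. p permutes {0..<N}}"
  have pderiv_signof: "pderiv (signof p * q) = signof p * pderiv q" for p and q :: "'a poly"
    by (cases "evenperm p") (simp_all add: sign_def pderiv_minus)
  have "pderiv (det_rows N V)
      = (\<Sum>p\<in>?P. \<Sum>k\<in>{0..<N}. signof p * (pderiv (V k (p k)) * (\<Prod>i\<in>{0..<N}-{k}. V i (p i))))"
    unfolding det_rows_leibniz higher_pderiv_sum[of 1, simplified]
    by (simp add: pderiv_signof pderiv_prod sum_distrib_left mult_ac)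
  also have "\<dots> = (\<Sum>k\<in>{0..<N}. \<Sum>p\<in>?P.
      signof p * (pderiv (V k (p k)) * (\<Prod>i\<in>{0..<N}-{k}. V i (p i))))"
    by (rule sum.swap)
  also have "\<dots> = (\<Sum>k<N. det_rows N (V(k := (\<lambda>j. pderiv (V k j)))))"
    unfolding det_rows_leibniz atLeast0LessThan
    by (intro sum.cong refl) (simp add: prod.remove[of "{..<N}"])
  finally show ?thesis .
qed

lemma poly_det_rows: "poly (det_rows N V) x = det_rows N (\<lambda>i j. poly (V i j) x)"
proof -
  interpret evaluation: comm_ring_hom "\<lambda>p. poly p x" by unfold_locales auto
  have "det_rows N (\<lambda>i j. poly (V i j) x)
      = det (map_mat (\<lambda>p. poly p x) (mat N N (\<lambda>(i, j). V i j)))"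
    unfolding det_rows_def by (intro arg_cong[of _ _ det] eq_matI) auto
  then show ?thesis by (simp add: det_rows_def)
qed

lemma det_rows_last_row_unit:
  assumes "k \<le> m"
  shows "det_rows (Suc m) (U(m := (\<lambda>j. if j = k then 1 else 0)))
       = (-1) ^ (m + k) * det_rows m (\<lambda>i j. U i (if j < k then j else Suc j))"
proof -
  have "det_rows (Suc m) (U(m := (\<lambda>j. if j = k then 1 else 0)))
      = (\<Sum>j<Suc m. if j = k then cofactor_rows (Suc m) U m j else 0)"
    by (simp add: det_rows_update_expansion if_distrib[of "\<lambda>a. a * _"] cong: if_cong)
  also have "\<dots> = cofactor_rows (Suc m) U m k"
    using assms by (simp add: sum.delta')
  also have "\<dots> = (-1) ^ (m + k) * det_rows m (\<lambda>i j. U i (if j < k then j else Suc j))"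
    unfolding cofactor_rows_def cofactor_def det_rows_def mat_delete_def
    by (rule arg_cong[where f = "\<lambda>B. (-1) ^ (m + k) * det B"]) (auto intro!: eq_matI)
  finally show ?thesis .
qed

lemma det_rows_Suc_last_unit:
  "det_rows (Suc m) (U(m := (\<lambda>j. if j = m then 1 else 0))) = det_rows m U"
proof -
  have "det_rows m (\<lambda>i j. U i (if j < m then j else Suc j)) = det_rows m U"
    by (rule det_rows_cong) simp
  then show ?thesis
    using det_rows_last_row_unit[of m m U] by (simp flip: mult_2)
qed

lemma det_rows_Suc_first_unit:
  "det_rows (Suc m) (U(m := (\<lambda>j. if j = 0 then 1 else 0))) = (-1) ^ m * det_rows m (\<lambda>i j. U i (Suc j))"
  using det_rows_last_row_unit[of 0 m U] by simp

section \<open>Rectangular Schur determinants\<close>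

definition schur_row :: "int \<Rightarrow> nat \<Rightarrow> nat \<Rightarrow> real poly" where
  "schur_row c i j = elem_poly (c + int j - int i)"

definition rect_det :: "int \<Rightarrow> nat \<Rightarrow> real poly" where
  "rect_det c N = det_rows N (schur_row c)"

text \<open>The recurrence p_(k-2) = 3 (k p_k - x p_(k-1)) summed over the rows: shifting every row of
  \<open>rect_det c N\<close> by two yields \<open>lower2 (N * c) (rect_det c N)\<close>.\<close>
definition lower2 :: "real \<Rightarrow> real poly \<Rightarrow> real poly" where
  "lower2 a s = smult 3 (smult a s - [:0, 1:] * pderiv s)"

lemma pderiv_schur_row: "pderiv (schur_row c i j) = schur_row c (Suc i) j"
  by (simp add: schur_row_def pderiv_elem_poly algebra_simps)

lemma schur_row_Suc_shift: "schur_row (c + 1) (Suc i) = schur_row c i"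
  by (simp add: schur_row_def fun_eq_iff algebra_simps)

lemma schur_row_shift2:
  "schur_row c (k + 2)
     = (\<lambda>j. 3 * (of_int (c - int k) + of_nat j) * schur_row c k j - 3 * [:0, 1:] * pderiv (schur_row c k j))"
proof
  fix j
  let ?r = "of_int (c + int j - int k) :: real"
  have "schur_row c (k + 2) j = smult 3 (smult ?r (schur_row c k j) - [:0, 1:] * pderiv (schur_row c k j))"
    using elem_poly_lower2[of "c + int j - int k"] by (simp add: schur_row_def pderiv_elem_poly algebra_simps)
  moreover have "of_int (c - int k) + of_nat j = [:?r:]"
    by (simp add: of_int_poly of_nat_poly)
  ultimately show "schur_row c (k + 2) j
      = 3 * (of_int (c - int k) + of_nat j) * schur_row c k j - 3 * [:0, 1:] * pderiv (schur_row c k j)"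
    by (simp add: numeral_mult_conv_smult smult_diff_right) (simp add: mult.commute)
qed

lemma sum_det_rows_shift2:
  "(\<Sum>k<N. det_rows N ((schur_row c)(k := schur_row c (k + 2))))
     = lower2 (of_nat N * of_int c) (rect_det c N)"
proof -
  let ?V = "schur_row c"
  define X :: "real poly" where "X = [:0, 1:]"
  have "(\<Sum>k<N. det_rows N (?V(k := ?V (k + 2))))
      = 3 * (\<Sum>k<N. det_rows N (?V(k := (\<lambda>j. (of_int (c - int k) + of_nat j) * ?V k j))))
        - 3 * X * (\<Sum>k<N. det_rows N (?V(k := (\<lambda>j. pderiv (?V k j)))))"
    unfolding schur_row_shift2[folded X_def]
    by (simp add: det_rows_update_expansion algebra_simps sum.distrib sum_subtractf sum_distrib_left)
  also have "\<dots> = 3 * (((\<Sum>k<N. of_int (c - int k)) + (\<Sum>j<N. of_nat j)) * rect_det c N)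
        - 3 * X * pderiv (rect_det c N)"
    by (simp add: det_rows_weighted_rows pderiv_det_rows rect_det_def)
  also have "(\<Sum>k<N. of_int (c - int k)) + (\<Sum>j<N. of_nat j) = (of_int (int N * c) :: real poly)"
    by (simp add: sum_subtractf)
  also have "3 * (of_int (int N * c) * rect_det c N) - 3 * X * pderiv (rect_det c N)
      = lower2 (of_nat N * of_int c) (rect_det c N)"
    by (simp add: lower2_def X_def of_int_poly numeral_mult_conv_smult smult_diff_right) (simp add: mult.commute)
  finally show ?thesis .
qed

lemma rect_det_zero: "rect_det c 0 = 1"
  by (simp add: rect_det_def det_rows_zero)

lemma rect_det_one: "rect_det c (Suc 0) = elem_poly c"
  by (simp add: rect_det_def det_rows_one schur_row_def)

lemma lower2_elem_poly: "lower2 (of_int c) (elem_poly c) = elem_poly (c - 2)"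
  by (simp add: lower2_def elem_poly_lower2 pderiv_elem_poly)

lemma rect_det_one_second_order_minus:
  "pderiv (pderiv (rect_det c (Suc 0))) - lower2 (of_int c) (rect_det c (Suc 0)) = 0"
  by (simp add: rect_det_one lower2_elem_poly pderiv_elem_poly)

lemma pderiv_rect_det:
  assumes "1 \<le> N"
  shows "pderiv (rect_det c N) = det_rows N ((schur_row c)(N - 1 := schur_row c N))"
proof -
  obtain n where N: "N = Suc n" using assms by (cases N) auto
  have "det_rows N ((schur_row c)(k := schur_row c (Suc k))) = 0" if "k < n" for k
    by (rule det_rows_identical_rows[of k N "Suc k"]) (use that N in auto)
  then show ?thesis
    by (simp add: rect_det_def pderiv_det_rows pderiv_schur_row N)
qed

lemma pderiv_rect_det_last_row:
  assumes "2 \<le> N"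
  shows "pderiv (det_rows N ((schur_row c)(N - 1 := schur_row c N)))
       = det_rows N ((schur_row c)(N - 2 := schur_row c (N - 1), N - 1 := schur_row c N))
         + det_rows N ((schur_row c)(N - 1 := schur_row c (N + 1)))"
proof -
  obtain n where N: "N = Suc (Suc n)" using assms by (metis add_2_eq_Suc le_Suc_ex)
  let ?U = "(schur_row c)(Suc n := schur_row c (Suc (Suc n)))"
  have "det_rows N (?U(k := (\<lambda>j. pderiv (?U k j)))) = 0" if "k < n" for k
    by (rule det_rows_identical_rows[of k N "Suc k"]) (use that N in \<open>auto simp: pderiv_schur_row\<close>)
  moreover have "?U(n := (\<lambda>j. pderiv (?U n j)))
      = (schur_row c)(n := schur_row c (Suc n), Suc n := schur_row c (Suc (Suc n)))"
    by (auto simp: fun_eq_iff pderiv_schur_row)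
  ultimately show ?thesis
    by (simp add: pderiv_det_rows N pderiv_schur_row)
qed

lemma sum_det_rows_shift2_rect:
  assumes "2 \<le> N"
  shows "(\<Sum>k<N. det_rows N ((schur_row c)(k := schur_row c (k + 2))))
       = - det_rows N ((schur_row c)(N - 2 := schur_row c (N - 1), N - 1 := schur_row c N))
         + det_rows N ((schur_row c)(N - 1 := schur_row c (N + 1)))"
proof -
  obtain n where N: "N = Suc (Suc n)" using assms by (metis add_2_eq_Suc le_Suc_ex)
  have "det_rows N ((schur_row c)(k := schur_row c (k + 2))) = 0" if "k < n" for k
    by (rule det_rows_identical_rows[of k N "k + 2"]) (use that N in auto)
  moreover have "(schur_row c)(n := schur_row c (n + 2))
      = (schur_row c)(n := schur_row c (n + 2), Suc n := schur_row c (Suc n))"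
    by (auto simp: fun_eq_iff)
  moreover have "det_rows N \<dots>
      = - det_rows N ((schur_row c)(n := schur_row c (Suc n), Suc n := schur_row c (n + 2)))"
    using N by (intro det_rows_swap) auto
  ultimately show ?thesis
    by (simp add: N)
qed

lemma rect_det_second_order_minus:
  assumes "2 \<le> N"
  shows "pderiv (pderiv (rect_det c N)) - lower2 (of_nat N * of_int c) (rect_det c N)
       = 2 * det_rows N ((schur_row c)(N - 2 := schur_row c (N - 1), N - 1 := schur_row c N))"
proof -
  from assms have "1 \<le> N" by simp
  then show ?thesis
    unfolding pderiv_rect_det[OF \<open>1 \<le> N\<close>] pderiv_rect_det_last_row[OF assms]
      sum_det_rows_shift2[symmetric] sum_det_rows_shift2_rect[OF assms]
    by simp
qed

lemma rect_det_second_order_plus: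
  assumes "1 \<le> N"
  shows "pderiv (pderiv (rect_det c N)) + lower2 (of_nat N * of_int c) (rect_det c N)
       = 2 * det_rows N ((schur_row c)(N - 1 := schur_row c (N + 1)))"
proof (cases "N = 1")
  case True
  then show ?thesis
    by (simp add: rect_det_one lower2_elem_poly pderiv_elem_poly det_rows_one schur_row_def)
next
  case False
  with assms have "2 \<le> N" by simp
  then show ?thesis
    unfolding pderiv_rect_det[OF assms] pderiv_rect_det_last_row[OF \<open>2 \<le> N\<close>]
      sum_det_rows_shift2[symmetric] sum_det_rows_shift2_rect[OF \<open>2 \<le> N\<close>]
    by simp
qed

text \<open>The Hirota equations with the gauge factors removed; \<open>a\<close> and \<open>b\<close> are the weights
  \<open>N * c\<close> of \<open>s\<close> and \<open>t\<close>.\<close>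
definition hirota_poly :: "real \<Rightarrow> real \<Rightarrow> real poly \<Rightarrow> real poly \<Rightarrow> real poly" where
  "hirota_poly a b s t = (pderiv (pderiv s) - lower2 a s) * t - 2 * pderiv s * pderiv t
     + s * (pderiv (pderiv t) + lower2 b t)"

lemma hirota_poly_const_right: "hirota_poly a 0 s 1 = pderiv (pderiv s) - lower2 a s"
  by (simp add: hirota_poly_def lower2_def)

lemma hirota_poly_rect_det_eq_0:
  fixes W :: "nat \<Rightarrow> nat \<Rightarrow> real poly"
  assumes N: "2 \<le> N" and k: "k < N"
    and vanish: "\<And>i. i < N - 2 \<Longrightarrow> det_rows N (W(k := schur_row c i)) = 0"
    and t0: "t = \<kappa> * det_rows N (W(k := schur_row c (N - 2)))"
    and t1: "pderiv t = \<kappa> * det_rows N (W(k := schur_row c (N - 1)))"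
    and t2: "pderiv (pderiv t) + lower2 b t = 2 * (\<kappa> * det_rows N (W(k := schur_row c N)))"
  shows "hirota_poly (of_nat N * of_int c) b (rect_det c N) t = 0"
proof -
  let ?V = "schur_row c"
  let ?X = "\<lambda>a b. det_rows N (?V(N - 2 := a, N - 1 := b))"
  let ?Z = "\<lambda>u. det_rows N (W(k := u))"
  have s0: "rect_det c N = ?X (?V (N - 2)) (?V (N - 1))"
    by (simp add: rect_det_def)
  have s1: "pderiv (rect_det c N) = ?X (?V (N - 2)) (?V N)"
    using N by (simp add: pderiv_rect_det)
  have "hirota_poly (of_nat N * of_int c) b (rect_det c N) t
      = 2 * \<kappa> * (?X (?V (N - 1)) (?V N) * ?Z (?V (N - 2)) - ?X (?V (N - 2)) (?V N) * ?Z (?V (N - 1))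
          + ?X (?V (N - 2)) (?V (N - 1)) * ?Z (?V N))"
    unfolding hirota_poly_def rect_det_second_order_minus[OF N] t2
    unfolding s1 t1 unfolding s0 t0 by (simp add: algebra_simps)
  also have "\<dots> = 0"
    using det_rows_pluecker[where V = ?V and a = "?V (N - 2)" and b = "?V (N - 1)" and c = "?V N",
        OF N k vanish]
    by simp
  finally show ?thesis .
qed

lemma hirota_poly_rect_det_col:
  "hirota_poly (of_nat N * of_int c) (of_nat N * of_int (c + 1)) (rect_det c N) (rect_det (c + 1) N) = 0"
proof -
  consider "N = 0" | "N = 1" | "2 \<le> N" by linarith
  then show ?thesis
  proof cases
    case 1
    then show ?thesis by (simp add: hirota_poly_def rect_det_zero lower2_def)
  next
    case 2
    then show ?thesis
      by (simp add: hirota_poly_def rect_det_one pderiv_elem_poly lower2_elem_poly algebra_simps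
          del: of_int_add)
  next
    case 3
    have t1: "pderiv (rect_det (c + 1) N) = det_rows N ((schur_row (c + 1))(N - 1 := schur_row c (N - 1)))"
      using 3 pderiv_rect_det[of N "c + 1"] schur_row_Suc_shift[of c "N - 1"] by simp
    have t2: "pderiv (pderiv (rect_det (c + 1) N)) + lower2 (of_nat N * of_int (c + 1)) (rect_det (c + 1) N)
        = 2 * det_rows N ((schur_row (c + 1))(N - 1 := schur_row c N))"
      using 3 rect_det_second_order_plus[of N "c + 1"] schur_row_Suc_shift[of c N] by simp
    show ?thesis
    proof (rule hirota_poly_rect_det_eq_0[where W = "schur_row (c + 1)" and k = "N - 1" and \<kappa> = 1])
      show "det_rows N ((schur_row (c + 1))(N - 1 := schur_row c i)) = 0" if "i < N - 2" for i
        using that 3 schur_row_Suc_shift[of c i] by (intro det_rows_identical_rows[of "Suc i" N "N - 1"]) auto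
      have "schur_row c (N - 2) = schur_row (c + 1) (N - 1)"
        using 3 schur_row_Suc_shift[of c "N - 2"] by (simp add: Suc_diff_Suc numeral_2_eq_2)
      then show "rect_det (c + 1) N = 1 * det_rows N ((schur_row (c + 1))(N - 1 := schur_row c (N - 2)))"
        by (simp add: rect_det_def)
    qed (use 3 t1 t2 in simp_all)
  qed
qed

lemma hirota_poly_rect_det_row:
  "hirota_poly (of_nat (Suc N) * of_int c) (of_nat N * of_int c) (rect_det c (Suc N)) (rect_det c N) = 0"
proof (cases "N = 0")
  case True
  then show ?thesis
    by (simp add: rect_det_zero hirota_poly_const_right rect_det_one_second_order_minus)
next
  case False
  \<comment> \<open>Bordering by a unit row turns \<open>N\<close>-row determinants into \<open>N + 1\<close>-row ones.\<close>
  let ?W = "(schur_row c)(N := (\<lambda>j. if j = N then 1 else 0))"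
  have Z: "det_rows (Suc N) (?W(N - 1 := u)) = det_rows N ((schur_row c)(N - 1 := u))" for u
  proof -
    have "?W(N - 1 := u) = ((schur_row c)(N - 1 := u))(N := (\<lambda>j. if j = N then 1 else 0))"
      using False by (auto simp: fun_eq_iff)
    then show ?thesis by (simp add: det_rows_Suc_last_unit)
  qed
  show ?thesis
  proof (rule hirota_poly_rect_det_eq_0[where W = ?W and k = "N - 1" and \<kappa> = 1])
    show "det_rows (Suc N) (?W(N - 1 := schur_row c i)) = 0" if "i < Suc N - 2" for i
      using that by (intro det_rows_identical_rows[of i "Suc N" "N - 1"]) auto
    show "rect_det c N = 1 * det_rows (Suc N) (?W(N - 1 := schur_row c (Suc N - 2)))"
      unfolding Z using False by (simp add: rect_det_def)
    show "pderiv (rect_det c N) = 1 * det_rows (Suc N) (?W(N - 1 := schur_row c (Suc N - 1)))"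
      unfolding Z using False by (simp add: pderiv_rect_det)
    show "pderiv (pderiv (rect_det c N)) + lower2 (of_nat N * of_int c) (rect_det c N)
        = 2 * (1 * det_rows (Suc N) (?W(N - 1 := schur_row c (Suc N))))"
      unfolding Z using False rect_det_second_order_plus[of N c] by simp
  qed (use False in auto)
qed

lemma hirota_poly_rect_det_diag:
  "hirota_poly (of_nat (Suc N) * of_int c) (of_nat N * of_int (c + 1)) (rect_det c (Suc N)) (rect_det (c + 1) N) = 0"
proof (cases "N = 0")
  case True
  then show ?thesis
    by (simp add: rect_det_zero hirota_poly_const_right rect_det_one_second_order_minus)
next
  case False
  \<comment> \<open>Bordering by the unit row at column 0 deletes that column,
    which turns \<open>c\<close> into \<open>c + 1\<close>.\<close>
  let ?W = "(schur_row c)(N := (\<lambda>j. if j = 0 then 1 else 0))"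
  have Z: "det_rows N ((schur_row (c + 1))(N - 1 := schur_row (c + 1) r))
      = (-1) ^ N * det_rows (Suc N) (?W(N - 1 := schur_row c r))" for r
  proof -
    have "?W(N - 1 := schur_row c r)
        = ((schur_row c)(N - 1 := schur_row c r))(N := (\<lambda>j. if j = 0 then 1 else 0))"
      using False by (auto simp: fun_eq_iff)
    moreover have "(\<lambda>i j. ((schur_row c)(N - 1 := schur_row c r)) i (Suc j))
        = (schur_row (c + 1))(N - 1 := schur_row (c + 1) r)"
      by (auto simp: fun_eq_iff schur_row_def algebra_simps)
    ultimately show ?thesis
      by (simp add: det_rows_Suc_first_unit flip: power_mult_distrib)
  qed
  show ?thesis
  proof (rule hirota_poly_rect_det_eq_0[where W = ?W and k = "N - 1" and \<kappa> = "(-1) ^ N"])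
    show "det_rows (Suc N) (?W(N - 1 := schur_row c i)) = 0" if "i < Suc N - 2" for i
      using that by (intro det_rows_identical_rows[of i "Suc N" "N - 1"]) auto
    show "rect_det (c + 1) N = (-1) ^ N * det_rows (Suc N) (?W(N - 1 := schur_row c (Suc N - 2)))"
      unfolding Z[symmetric] using False by (simp add: rect_det_def)
    show "pderiv (rect_det (c + 1) N) = (-1) ^ N * det_rows (Suc N) (?W(N - 1 := schur_row c (Suc N - 1)))"
      unfolding Z[symmetric] using False by (simp add: pderiv_rect_det)
    show "pderiv (pderiv (rect_det (c + 1) N)) + lower2 (of_nat N * of_int (c + 1)) (rect_det (c + 1) N)
        = 2 * ((-1) ^ N * det_rows (Suc N) (?W(N - 1 := schur_row c (Suc N))))"
      unfolding Z[symmetric] using False rect_det_second_order_plus[of N "c + 1"] by simp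
  qed (use False in auto)
qed

section \<open>Removing the gauge factor\<close>

definition gauge :: "real \<Rightarrow> real poly \<Rightarrow> real \<Rightarrow> real" where
  "gauge \<alpha> A x = exp (- (x ^ 4) / 12 + \<alpha> * x ^ 2) * poly A x"

definition gauge_poly :: "real \<Rightarrow> real poly" where
  "gauge_poly \<alpha> = [:0, 2 * \<alpha>, 0, - 1 / 3:]"

lemma poly_gauge_poly: "poly (gauge_poly \<alpha>) x = 2 * \<alpha> * x - x ^ 3 / 3"
  by (simp add: gauge_poly_def algebra_simps power3_eq_cube)

lemma poly_pderiv_gauge_poly: "poly (pderiv (gauge_poly \<alpha>)) x = 2 * \<alpha> - x ^ 2"
  by (simp add: gauge_poly_def pderiv_pCons algebra_simps power2_eq_square)

lemma deriv_gauge: "deriv (gauge \<alpha> A) = gauge \<alpha> (gauge_poly \<alpha> * A + pderiv A)"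
proof
  fix x
  have "(gauge \<alpha> A has_real_derivative gauge \<alpha> (gauge_poly \<alpha> * A + pderiv A) x) (at x)"
    unfolding gauge_def[abs_def]
    by (auto intro!: derivative_eq_intros simp: poly_gauge_poly algebra_simps power2_eq_square power3_eq_cube)
  then show "deriv (gauge \<alpha> A) x = gauge \<alpha> (gauge_poly \<alpha> * A + pderiv A) x"
    by (rule DERIV_imp_deriv)
qed

lemma hirota_op_gauge:
  "hirota_op c (gauge \<alpha> A) (gauge \<beta> B) x
     = exp (- (x ^ 4) / 12 + \<alpha> * x ^ 2) * exp (- (x ^ 4) / 12 + \<beta> * x ^ 2) *
       (poly (pderiv (pderiv A)) x * poly B x - 2 * poly (pderiv A) x * poly (pderiv B) x
          + poly A x * poly (pderiv (pderiv B)) x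
        + (4 * (\<alpha> - \<beta>) - 1) * x * (poly (pderiv A) x * poly B x - poly A x * poly (pderiv B) x)
        + ((4 * (\<alpha> - \<beta>) ^ 2 - 2 * (\<alpha> - \<beta>) - 2) * x ^ 2 + 2 * \<alpha> + 2 * \<beta> + c)
            * poly A x * poly B x)"
  unfolding hirota_op_def deriv_gauge unfolding gauge_def
  by (simp add: pderiv_add pderiv_mult poly_gauge_poly poly_pderiv_gauge_poly algebra_simps
      power2_eq_square power3_eq_cube)

lemma poly_hirota_poly:
  "poly (hirota_poly a b s t) x
     = poly (pderiv (pderiv s)) x * poly t x - 2 * poly (pderiv s) x * poly (pderiv t) x
         + poly s x * poly (pderiv (pderiv t)) x
       + 3 * x * (poly (pderiv s) x * poly t x - poly s x * poly (pderiv t) x) + 3 * (b - a) * poly s x * poly t x"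
  by (simp add: hirota_poly_def lower2_def algebra_simps)

lemma hirota_op_gauge_half:
  assumes "\<beta> = \<alpha> + 1 / 2" and "c = 3 * (a - b) - 2 * \<alpha> - 2 * \<beta>"
  shows "hirota_op c (gauge \<alpha> A) (gauge \<beta> B) x
       = exp (- (x ^ 4) / 12 + \<alpha> * x ^ 2) * exp (- (x ^ 4) / 12 + \<beta> * x ^ 2) * poly (hirota_poly b a B A) x"
  unfolding hirota_op_gauge poly_hirota_poly assms by (simp add: algebra_simps power2_eq_square)

lemma hirota_op_gauge_one:
  assumes "\<alpha> = \<beta> + 1" and "c = 3 * (b - a) - 2 * \<alpha> - 2 * \<beta>"
  shows "hirota_op c (gauge \<alpha> A) (gauge \<beta> B) x
       = exp (- (x ^ 4) / 12 + \<alpha> * x ^ 2) * exp (- (x ^ 4) / 12 + \<beta> * x ^ 2) * poly (hirota_poly a b A B) x"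
  unfolding hirota_op_gauge poly_hirota_poly assms by (simp add: algebra_simps power2_eq_square)

lemma u_fun_eq_gauge: "u_fun m n = gauge ((real m - real n) / 2) (rect_det (int n) m)"
proof
  fix x
  have "schur_rect m n x = poly (rect_det (int n) m) x"
    unfolding schur_rect_def rect_det_def poly_det_rows unfolding det_rows_def
    by (intro arg_cong[of _ _ det] eq_matI) (auto simp: schur_row_def poly_elem_poly algebra_simps)
  then show "u_fun m n x = gauge ((real m - real n) / 2) (rect_det (int n) m) x"
    by (simp add: u_fun_def gauge_def)
qed

theorem proposition5p8:
  fixes m n :: nat and x :: real
  shows "hirota_op (real m + 2 * real n + 1) (u_fun m (n + 1)) (u_fun m n) x = 0
       \<and> hirota_op (real m - real n) (u_fun (m + 1) n) (u_fun m (n + 1)) x = 0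
       \<and> hirota_op (- 2 * real m - real n - 1) (u_fun m n) (u_fun (m + 1) n) x = 0"
proof (intro conjI)
  show "hirota_op (real m + 2 * real n + 1) (u_fun m (n + 1)) (u_fun m n) x = 0"
    unfolding u_fun_eq_gauge
    by (subst hirota_op_gauge_half[where a = "real m * (real n + 1)" and b = "real m * real n"])
      (use hirota_poly_rect_det_col[of m "int n"] in
        \<open>simp_all add: algebra_simps, simp_all add: field_simps\<close>)
  show "hirota_op (real m - real n) (u_fun (m + 1) n) (u_fun m (n + 1)) x = 0"
    unfolding u_fun_eq_gauge
    by (subst hirota_op_gauge_one[where a = "(real m + 1) * real n" and b = "real m * (real n + 1)"])
      (use hirota_poly_rect_det_diag[of m "int n"] in
        \<open>simp_all add: algebra_simps, simp_all add: field_simps\<close>)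
  show "hirota_op (- 2 * real m - real n - 1) (u_fun m n) (u_fun (m + 1) n) x = 0"
    unfolding u_fun_eq_gauge
    by (subst hirota_op_gauge_half[where a = "real m * real n" and b = "(real m + 1) * real n"])
      (use hirota_poly_rect_det_row[of m "int n"] in
        \<open>simp_all add: algebra_simps, simp_all add: field_simps\<close>)
qed

end
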